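(* Let $G$ be an infinite discrete countable group, $(X,\mu,G)$ a $G$-measure preserving system and $B\in\mathcal{B}_X^\mu$. If $\{U_g1_B:g\in G\}$ is precompact in $L^2(\mu)$, then $h^*_\mu(G,\{B,B^c\})=0$.
   Context: $(X,\mu,G)$: compact metric space with $G$ acting by homeomorphisms and $G$-invariant Borel probability $\mu$; $\mathcal{B}_X^\mu$ is the $\mu$-completed Borel $\sigma$-algebra; $U_gf(x)=f(gx)$. For a finite partition $\alpha$ into sets of $\mathcal{B}_X^\mu$ and a sequence $\mathcal{A}=(g_n)$ in $G$, $h^{\mathcal{A}}_\mu(G,\alpha)=\limsup_n\frac1nH_\mu(\bigvee_{i=1}^ng_i^{-1}\alpha)$ with $H_\mu(\beta)=-\sum_{C\in\beta}\mu(C)\log\mu(C)$, and $h^*_\mu(G,\alpha)=\sup_{\mathcal{A}}h^{\mathcal{A}}_\mu(G,\alpha)$ over all sequences in $G$. *)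

theory Defs
  imports "HOL-Analysis.Analysis" "HOL-Probability.Probability" "HOL-Algebra.Group"
begin

(* Shannon entropy of a finite partition beta (with 0 log 0 = 0, since ln 0 = 0 in HOL) *)
definition part_entropy :: "'x measure \<Rightarrow> 'x set set \<Rightarrow> real" where
  "part_entropy M beta = - (\<Sum>C\<in>beta. measure M C * ln (measure M C))"

definition join_pre ::
  "'x set \<Rightarrow> ('g \<Rightarrow> 'x \<Rightarrow> 'x) \<Rightarrow> 'x set set \<Rightarrow> (nat \<Rightarrow> 'g) \<Rightarrow> nat \<Rightarrow> 'x set set" where
  "join_pre X act alpha gs n =
     {(\<Inter>i\<in>{1..n}. {x\<in>X. act (gs i) x \<in> c i}) | c. \<forall>i\<in>{1..n}. c i \<in> alpha}"

definition seq_entropy ::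
  "'x measure \<Rightarrow> 'x set \<Rightarrow> ('g \<Rightarrow> 'x \<Rightarrow> 'x) \<Rightarrow> 'x set set \<Rightarrow> (nat \<Rightarrow> 'g) \<Rightarrow> ereal" where
  "seq_entropy M X act alpha gs =
     limsup (\<lambda>n. ereal (part_entropy M (join_pre X act alpha gs n) / real n))"

definition sup_seq_entropy ::
  "('g, 'b) monoid_scheme \<Rightarrow> 'x measure \<Rightarrow> 'x set \<Rightarrow> ('g \<Rightarrow> 'x \<Rightarrow> 'x) \<Rightarrow> 'x set set \<Rightarrow> ereal" where
  "sup_seq_entropy G M X act alpha =
     (SUP gs\<in>{gs. \<forall>n. gs n \<in> carrier G}. seq_entropy M X act alpha gs)"

end

theory Submission
  imports Defs
begin

text \<open>
  Precompactness of the orbit of \<open>1\<^sub>B\<close> gives, for every \<open>\<epsilon> > 0\<close>, finitely many sets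
  \<open>C\<^sub>1, \<dots>, C\<^sub>k\<close> such that each \<open>g\<^sup>-\<^sup>1B\<close> differs from some \<open>C\<^sub>j\<close> by a set of measure
  less than \<open>\<epsilon>\<close>. The cell of \<open>x\<close> in \<open>g\<^sub>1\<^sup>-\<^sup>1\<alpha> \<or> \<dots> \<or> g\<^sub>n\<^sup>-\<^sup>1\<alpha>\<close> is therefore determined by
  which of \<open>C\<^sub>1, \<dots>, C\<^sub>k\<close> contain \<open>x\<close> (entropy at most \<open>k log 2\<close>) together with which of the
  \<open>n\<close> symmetric differences contain \<open>x\<close> (entropy at most \<open>2\<surd>\<epsilon>\<close> each, because they are small).
  Hence \<open>H(g\<^sub>1\<^sup>-\<^sup>1\<alpha> \<or> \<dots> \<or> g\<^sub>n\<^sup>-\<^sup>1\<alpha>) \<le> k log 2 + 2n\<surd>\<epsilon>\<close>, and the entropy along every sequence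
  vanishes.
\<close>

lemma minus_mult_ln_le_sqrt:
  fixes p :: real
  assumes "0 \<le> p"
  shows "- (p * ln p) \<le> 2 * (sqrt p - p)"
proof (cases "p = 0")
  case False
  with assms have "0 < sqrt p"
    by simp
  then have "- ln p = 2 * ln (1 / sqrt p)"
    using assms by (simp add: ln_div ln_sqrt)
  also have "\<dots> \<le> 2 * (1 / sqrt p - 1)"
    using ln_le_minus_one[of "1 / sqrt p"] \<open>0 < sqrt p\<close> by simp
  finally have "p * - ln p \<le> p * (2 * (1 / sqrt p - 1))"
    using assms by (rule mult_left_mono)
  also have "\<dots> = 2 * (sqrt p - p)"
    using assms \<open>0 < sqrt p\<close> by (simp add: field_simps)
  finally show ?thesis
    by simp
qed simp

lemma binary_entropy_le_sqrt:
  fixes p :: real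
  assumes "0 \<le> p" "p \<le> 1"
  shows "- (p * ln p) - (1 - p) * ln (1 - p) \<le> 2 * sqrt p"
proof -
  have "- ((1 - p) * ln (1 - p)) \<le> p"
  proof (cases "p = 1")
    case False
    with assms have "0 < 1 - p"
      by simp
    have "(1 - p) * - ln (1 - p) \<le> (1 - p) * (1 / (1 - p) - 1)"
      using ln_le_minus_one[of "1 / (1 - p)"] \<open>0 < 1 - p\<close>
      by (intro mult_left_mono) (simp_all add: ln_div)
    also have "\<dots> = p"
      using \<open>0 < 1 - p\<close> by (simp add: field_simps)
    finally show ?thesis
      by simp
  qed simp
  then show ?thesis
    using minus_mult_ln_le_sqrt[OF assms(1)] assms(1) by (smt (verit))
qed

text \<open>The random variable whose level sets are the cells of the join of the partitions
  \<open>{A, -A}\<close>, \<open>A\<close> in the list.\<close>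

definition memberships :: "'a set list \<Rightarrow> 'a \<Rightarrow> bool list" where
  "memberships As x = map (\<lambda>A. x \<in> A) As"

lemma memberships_Nil: "memberships [] = (\<lambda>x. [])"
  by (simp add: memberships_def fun_eq_iff)

lemma memberships_Cons:
  "memberships (A # As) = (\<lambda>(a, l). a # l) \<circ> (\<lambda>x. (x \<in> A, memberships As x))"
  by (simp add: memberships_def fun_eq_iff)

lemma length_memberships [simp]: "length (memberships As x) = length As"
  by (simp add: memberships_def)

lemma memberships_subset:
  assumes "set As \<subseteq> set Cs"
  shows "memberships As x = map (\<lambda>A. the (map_of (zip Cs (memberships Cs x)) A)) As"
  using assms by (auto simp: memberships_def map_of_zip_map)

lemma memberships_sym_diff:
  assumes "length As = length Cs"
  shows "memberships As x
    = map2 (\<noteq>) (memberships Cs x) (memberships (map2 (\<lambda>A C. sym_diff A C) As Cs) x)"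
  using assms by (induction As Cs rule: list_induct2) (auto simp: memberships_def)

lemma simple_function_mem: "A \<in> sets M \<Longrightarrow> simple_function M (\<lambda>x. x \<in> A)"
  by (simp add: simple_function_eq_measurable)

lemma simple_function_memberships: "set As \<subseteq> sets M \<Longrightarrow> simple_function M (memberships As)"
  by (induction As) (simp_all add: memberships_Nil memberships_Cons simple_function_mem)

context information_space
begin

lemma entropy_Pair_le:
  assumes "simple_function M X" "simple_function M Y"
  shows "\<H>(\<lambda>x. (X x, Y x)) \<le> \<H>(X) + \<H>(Y)"
  using entropy_chain_rule[OF assms] conditional_entropy_less_eq_entropy[OF assms(2,1)] by simp

lemma entropy_le_card_simple:
  assumes "simple_function M X"
  shows "\<H>(X) \<le> log b (card (X ` space M))"
  by (rule entropy_le_card[OF simple_distributedI[OF assms measure_nonneg refl]])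

lemma entropy_mem_eq:
  assumes "A \<in> events"
  shows "\<H>(\<lambda>x. x \<in> A) = - (prob A * log b (prob A) + (1 - prob A) * log b (1 - prob A))"
proof -
  let ?p = "\<lambda>v. prob ((\<lambda>x. x \<in> A) -` {v} \<inter> space M)"
  have "\<H>(\<lambda>x. x \<in> A) = - (\<Sum>v\<in>(\<lambda>x. x \<in> A) ` space M. ?p v * log b (?p v))"
    by (rule entropy_simple_distributed
        [OF simple_distributedI[OF simple_function_mem[OF assms] measure_nonneg refl]])
  also have "(\<Sum>v\<in>(\<lambda>x. x \<in> A) ` space M. ?p v * log b (?p v)) = (\<Sum>v\<in>UNIV. ?p v * log b (?p v))"
  proof (rule sum.mono_neutral_left)
    have "(\<lambda>x. x \<in> A) -` {v} \<inter> space M = {}" if "v \<notin> (\<lambda>x. x \<in> A) ` space M" for v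
      using that by blast
    then show "\<forall>v\<in>UNIV - (\<lambda>x. x \<in> A) ` space M. ?p v * log b (?p v) = 0"
      by simp
  qed auto
  also have "?p True = prob A"
    using sets.sets_into_space[OF assms] by (simp add: Int_absorb2 vimage_def)
  moreover have "?p False = 1 - prob A"
    using prob_compl[OF assms] by (simp add: vimage_def Diff_eq Int_commute Compl_eq)
  ultimately show ?thesis
    by (simp add: UNIV_bool)
qed

lemma entropy_mem_le_sqrt:
  assumes "A \<in> events"
  shows "\<H>(\<lambda>x. x \<in> A) \<le> 2 * sqrt (prob A) / ln b"
proof -
  have "0 < ln b"
    using b_gt_1 by simp
  then have "\<H>(\<lambda>x. x \<in> A) = (- (prob A * ln (prob A)) - (1 - prob A) * ln (1 - prob A)) / ln b"
    by (simp add: entropy_mem_eq[OF assms] log_def field_simps)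
  also have "\<dots> \<le> 2 * sqrt (prob A) / ln b"
    using b_gt_1 by (intro divide_right_mono binary_entropy_le_sqrt) auto
  finally show ?thesis .
qed

lemma entropy_memberships_le_length:
  assumes "set As \<subseteq> events"
  shows "\<H>(memberships As) \<le> length As * log b 2"
proof -
  let ?R = "memberships As ` space M"
  have R: "?R \<subseteq> {xs. length xs = length As}"
    by auto
  have fin: "finite {xs :: bool list. length xs = length As}"
    using finite_lists_length_eq[of "UNIV :: bool set"] by simp
  have "card ?R \<le> 2 ^ length As"
    using card_mono[OF fin R] card_lists_length_eq[of "UNIV :: bool set" "length As"] by simp
  moreover have "0 < card ?R"
    using finite_subset[OF R fin] not_empty by (simp add: card_gt_0_iff)
  ultimately have "log b (card ?R) \<le> log b (2 ^ length As)"
    using b_gt_1 by (subst log_le_cancel_iff) auto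
  then show ?thesis
    using entropy_le_card_simple[OF simple_function_memberships[OF assms]]
    by (simp add: log_nat_power)
qed

lemma entropy_memberships_le_sum:
  assumes "set As \<subseteq> events"
  shows "\<H>(memberships As) \<le> (\<Sum>A\<leftarrow>As. \<H>(\<lambda>x. x \<in> A))"
  using assms
proof (induction As)
  case Nil
  then show ?case
    using entropy_memberships_le_length[of "[]"] by simp
next
  case (Cons A As)
  have A: "simple_function M (\<lambda>x. x \<in> A)" and As: "simple_function M (memberships As)"
    using Cons.prems by (auto intro: simple_function_mem simple_function_memberships)
  have "\<H>(memberships (A # As)) \<le> \<H>(\<lambda>x. (x \<in> A, memberships As x))"
    unfolding memberships_Cons by (rule entropy_data_processing) (simp add: A As)
  also have "\<dots> \<le> \<H>(\<lambda>x. x \<in> A) + \<H>(memberships As)"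
    by (rule entropy_Pair_le[OF A As])
  finally show ?case
    using Cons by simp
qed

lemma entropy_memberships_mono:
  assumes "set As \<subseteq> set Cs" "set Cs \<subseteq> events"
  shows "\<H>(memberships As) \<le> \<H>(memberships Cs)"
proof -
  have "memberships As = (\<lambda>v. map (\<lambda>A. the (map_of (zip Cs v) A)) As) \<circ> memberships Cs"
    using memberships_subset[OF assms(1)] by (simp add: fun_eq_iff)
  then show ?thesis
    by (simp only: entropy_data_processing simple_function_memberships assms(2))
qed

lemma entropy_memberships_le_sym_diff:
  assumes "length As = length Cs" "set As \<subseteq> events" "set Cs \<subseteq> events"
  shows "\<H>(memberships As)
    \<le> \<H>(memberships Cs) + \<H>(memberships (map2 (\<lambda>A C. sym_diff A C) As Cs))"
proof -
  let ?Ds = "map2 (\<lambda>A C. sym_diff A C) As Cs"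
  have "set ?Ds \<subseteq> events"
    using assms by (force simp: set_zip)
  then have Cs: "simple_function M (memberships Cs)" and Ds: "simple_function M (memberships ?Ds)"
    using assms(3) by (simp_all add: simple_function_memberships)
  have "memberships As = (\<lambda>(u, w). map2 (\<noteq>) u w) \<circ> (\<lambda>x. (memberships Cs x, memberships ?Ds x))"
    using memberships_sym_diff[OF assms(1)] by (simp add: fun_eq_iff)
  then have "\<H>(memberships As) \<le> \<H>(\<lambda>x. (memberships Cs x, memberships ?Ds x))"
    by (simp only: entropy_data_processing simple_function_Pair Cs Ds)
  also have "\<dots> \<le> \<H>(memberships Cs) + \<H>(memberships ?Ds)"
    by (rule entropy_Pair_le[OF Cs Ds])
  finally show ?thesis .
qed

lemma entropy_memberships_le_approx:
  assumes "set As \<subseteq> events" "set Fs \<subseteq> events"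
    and approx: "\<And>A. A \<in> set As \<Longrightarrow> \<exists>C\<in>set Fs. prob (sym_diff A C) < e"
  shows "\<H>(memberships As) \<le> length Fs * log b 2 + length As * (2 * sqrt e / ln b)"
proof -
  obtain near where near: "\<And>A. A \<in> set As \<Longrightarrow> near A \<in> set Fs \<and> prob (sym_diff A (near A)) < e"
    using approx by metis
  have "near A \<in> events" if "A \<in> set As" for A
    using near[OF that] assms(2) by blast
  let ?Cs = "map near As"
  let ?Ds = "map (\<lambda>A. sym_diff A (near A)) As"
  have events: "set ?Cs \<subseteq> events" "set ?Ds \<subseteq> events"
    using assms(1) \<open>\<And>A. A \<in> set As \<Longrightarrow> near A \<in> events\<close> by auto
  have "\<H>(memberships ?Cs) \<le> \<H>(memberships Fs)"
    using near assms(2) by (intro entropy_memberships_mono) auto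
  also have "\<dots> \<le> length Fs * log b 2"
    by (rule entropy_memberships_le_length[OF assms(2)])
  finally have Cs: "\<H>(memberships ?Cs) \<le> length Fs * log b 2" .
  have "\<H>(\<lambda>x. x \<in> D) \<le> 2 * sqrt e / ln b" if "D \<in> set ?Ds" for D
  proof -
    obtain A where "A \<in> set As" "D = sym_diff A (near A)"
      using \<open>D \<in> set ?Ds\<close> by auto
    then have "prob D < e"
      using near by blast
    have "\<H>(\<lambda>x. x \<in> D) \<le> 2 * sqrt (prob D) / ln b"
      using events that by (intro entropy_mem_le_sqrt) auto
    also have "\<dots> \<le> 2 * sqrt e / ln b"
      using \<open>prob D < e\<close> b_gt_1 by (simp add: divide_right_mono)
    finally show ?thesis .
  qed
  then have "(\<Sum>D\<leftarrow>?Ds. \<H>(\<lambda>x. x \<in> D)) \<le> length As * (2 * sqrt e / ln b)"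
    using sum_list_mono[of ?Ds _ "\<lambda>_. 2 * sqrt e / ln b"] by (simp add: sum_list_triv)
  then have Ds: "\<H>(memberships ?Ds) \<le> length As * (2 * sqrt e / ln b)"
    using entropy_memberships_le_sum[OF events(2)] by linarith
  have "map2 (\<lambda>A C. sym_diff A C) As ?Cs = ?Ds"
    by (induction As) auto
  then show ?thesis
    using entropy_memberships_le_sym_diff[of As ?Cs] assms(1) events Cs Ds by simp
qed

lemma entropy_memberships_sublinear:
  assumes approx: "\<forall>e>0. \<exists>F. finite F \<and> F \<subseteq> events \<and> (\<forall>A\<in>\<A>. \<exists>C\<in>F. prob (sym_diff A C) < e)"
    and "\<A> \<subseteq> events" and "0 < (d :: real)"
  obtains L where "\<And>As. set As \<subseteq> \<A> \<Longrightarrow> \<H>(memberships As) \<le> L + d * length As"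
proof -
  have "0 < ln b"
    using b_gt_1 by simp
  define e where "e = (d * ln b / 2)\<^sup>2"
  have "0 < e"
    using \<open>0 < d\<close> \<open>0 < ln b\<close> by (simp add: e_def)
  then obtain F where "finite F" "F \<subseteq> events" and F: "\<forall>A\<in>\<A>. \<exists>C\<in>F. prob (sym_diff A C) < e"
    using approx[rule_format, OF \<open>0 < e\<close>] by blast
  obtain Fs where "set Fs = F"
    using finite_list[OF \<open>finite F\<close>] by blast
  have "2 * sqrt e / ln b = d"
    using \<open>0 < d\<close> \<open>0 < ln b\<close> by (simp add: e_def)
  then have "\<H>(memberships As) \<le> length Fs * log b 2 + d * length As" if "set As \<subseteq> \<A>" for As
    using entropy_memberships_le_approx[of As Fs e] that F \<open>set Fs = F\<close> \<open>F \<subseteq> events\<close> \<open>\<A> \<subseteq> events\<close>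
    by (auto simp: mult.commute)
  then show ?thesis
    using that by blast
qed

end

lemma part_entropy_Diff_empty: "part_entropy M (\<P> - {{}}) = part_entropy M \<P>"
proof (cases "finite \<P>")
  case True
  have "(\<Sum>C\<in>\<P> - {{}}. measure M C * ln (measure M C)) = (\<Sum>C\<in>\<P>. measure M C * ln (measure M C))"
    using True by (intro sum.mono_neutral_left) auto
  then show ?thesis
    by (simp add: part_entropy_def)
next
  case False
  then have "infinite (\<P> - {{}})"
    by simp
  with False show ?thesis
    by (simp add: part_entropy_def)
qed

lemma (in prob_space) part_entropy_nonneg: "0 \<le> part_entropy M \<P>"
proof -
  have "prob C * ln (prob C) \<le> 0" for C
  proof (cases "prob C = 0")
    case False
    then have "0 < prob C"
      using measure_nonneg[of M C] by linarith
    then show ?thesis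
      by (simp add: mult_nonneg_nonpos)
  qed simp
  then show ?thesis
    unfolding part_entropy_def by (simp add: sum_nonpos)
qed

lemma (in information_space) entropy_eq_part_entropy:
  assumes "b = exp 1" and Y: "simple_function M Y"
  shows "\<H>(Y) = part_entropy M ((\<lambda>v. Y -` {v} \<inter> space M) ` Y ` space M)"
proof -
  have "\<H>(Y) = - (\<Sum>v\<in>Y ` space M. prob (Y -` {v} \<inter> space M) * log b (prob (Y -` {v} \<inter> space M)))"
    by (rule entropy_simple_distributed[OF simple_distributedI[OF Y measure_nonneg refl]])
  moreover have "inj_on (\<lambda>v. Y -` {v} \<inter> space M) (Y ` space M)"
    by (rule inj_onI) blast
  ultimately show ?thesis
    using assms(1) by (simp add: part_entropy_def sum.reindex log_def)
qed

text \<open>For \<open>n = 0\<close> the join is \<open>{UNIV}\<close> rather than \<open>{X}\<close>, since the intersection is over an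
  empty index set.\<close>

lemma join_pre_cell_eq_level_set:
  fixes B :: "'a set"
  assumes "0 < n" and maps: "\<And>i x. i \<in> {1..n} \<Longrightarrow> x \<in> X \<Longrightarrow> act (gs i) x \<in> X"
    and "x \<in> X" and c: "\<forall>i\<in>{1..n}. c i \<in> {B, X - B} \<and> act (gs i) x \<in> c i"
  defines "Y \<equiv> memberships (map (\<lambda>i. {x \<in> X. act (gs i) x \<in> B}) [1..<Suc n])"
  shows "(\<Inter>i\<in>{1..n}. {y \<in> X. act (gs i) y \<in> c i}) = Y -` {Y x} \<inter> X"
proof -
  have "1 \<in> {1..n}"
    using \<open>0 < n\<close> by simp
  have "(\<Inter>i\<in>{1..n}. {y \<in> X. act (gs i) y \<in> c i}) = {y \<in> X. \<forall>i\<in>{1..n}. act (gs i) y \<in> c i}"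
    using \<open>1 \<in> {1..n}\<close> by blast
  also have "\<dots> = {y \<in> X. \<forall>i\<in>{1..n}. act (gs i) y \<in> B \<longleftrightarrow> act (gs i) x \<in> B}"
    using c maps \<open>x \<in> X\<close> by blast
  also have "\<dots> = Y -` {Y x} \<inter> X"
  proof -
    have "Y y = Y x \<longleftrightarrow> (\<forall>i\<in>{1..n}. act (gs i) y \<in> B \<longleftrightarrow> act (gs i) x \<in> B)" if "y \<in> X" for y
      using that \<open>x \<in> X\<close> by (auto simp: Y_def memberships_def)
    then show ?thesis
      by auto
  qed
  finally show ?thesis .
qed

lemma join_pre_Diff_empty_eq_level_sets:
  fixes B :: "'a set"
  assumes "0 < n" and maps: "\<And>i x. i \<in> {1..n} \<Longrightarrow> x \<in> X \<Longrightarrow> act (gs i) x \<in> X"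
  defines "Y \<equiv> memberships (map (\<lambda>i. {x \<in> X. act (gs i) x \<in> B}) [1..<Suc n])"
  shows "join_pre X act {B, X - B} gs n - {{}} = (\<lambda>v. Y -` {v} \<inter> X) ` Y ` X"
proof (intro equalityI subsetI)
  fix C
  assume C_join: "C \<in> join_pre X act {B, X - B} gs n - {{}}"
  then obtain c where C: "C = (\<Inter>i\<in>{1..n}. {y \<in> X. act (gs i) y \<in> c i})"
    and c: "\<forall>i\<in>{1..n}. c i \<in> {B, X - B}"
    unfolding join_pre_def by blast
  obtain x where "x \<in> C"
    using C_join by blast
  have "1 \<in> {1..n}"
    using \<open>0 < n\<close> by simp
  with C \<open>x \<in> C\<close> have "x \<in> X"
    by blast
  with C c \<open>x \<in> C\<close> have "C = Y -` {Y x} \<inter> X"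
    unfolding Y_def
    using join_pre_cell_eq_level_set[where X = X and act = act and gs = gs and B = B, OF \<open>0 < n\<close> maps]
    by auto
  then show "C \<in> (\<lambda>v. Y -` {v} \<inter> X) ` Y ` X"
    using \<open>x \<in> X\<close> by blast
next
  fix C
  assume "C \<in> (\<lambda>v. Y -` {v} \<inter> X) ` Y ` X"
  then obtain x where "x \<in> X" and C: "C = Y -` {Y x} \<inter> X"
    by blast
  define c where "c i = (if act (gs i) x \<in> B then B else X - B)" for i
  have c: "\<forall>i\<in>{1..n}. c i \<in> {B, X - B} \<and> act (gs i) x \<in> c i"
    using maps \<open>x \<in> X\<close> by (auto simp: c_def)
  then have "C = (\<Inter>i\<in>{1..n}. {y \<in> X. act (gs i) y \<in> c i})"
    unfolding C Y_def
    using join_pre_cell_eq_level_set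
      [where X = X and act = act and gs = gs and B = B, OF \<open>0 < n\<close> maps \<open>x \<in> X\<close>]
    by simp
  then have "C \<in> join_pre X act {B, X - B} gs n"
    using c unfolding join_pre_def by blast
  moreover have "x \<in> C"
    using C \<open>x \<in> X\<close> by simp
  ultimately show "C \<in> join_pre X act {B, X - B} gs n - {{}}"
    by blast
qed

lemma (in information_space) part_entropy_join_pre_eq_entropy:
  fixes B :: "'a set"
  assumes "b = exp 1" "space M = X" "0 < n"
    and maps: "\<And>i x. i \<in> {1..n} \<Longrightarrow> x \<in> X \<Longrightarrow> act (gs i) x \<in> X"
    and events: "\<And>i. i \<in> {1..n} \<Longrightarrow> {x \<in> X. act (gs i) x \<in> B} \<in> events"
  defines "Y \<equiv> memberships (map (\<lambda>i. {x \<in> X. act (gs i) x \<in> B}) [1..<Suc n])"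
  shows "part_entropy M (join_pre X act {B, X - B} gs n) = \<H>(Y)"
proof -
  have "simple_function M Y"
    unfolding Y_def using events by (intro simple_function_memberships) auto
  have "part_entropy M (join_pre X act {B, X - B} gs n)
      = part_entropy M (join_pre X act {B, X - B} gs n - {{}})"
    by (simp add: part_entropy_Diff_empty)
  also have "\<dots> = part_entropy M ((\<lambda>v. Y -` {v} \<inter> space M) ` Y ` space M)"
    unfolding Y_def \<open>space M = X\<close>
    by (rule arg_cong[OF join_pre_Diff_empty_eq_level_sets
          [where X = X and act = act and gs = gs and B = B, OF \<open>0 < n\<close> maps]])
  also have "\<dots> = \<H>(Y)"
    using entropy_eq_part_entropy[OF \<open>b = exp 1\<close> \<open>simple_function M Y\<close>] by simp
  finally show ?thesis .
qed

lemma limsup_div_eq_0_if_sublinear: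
  fixes f :: "nat \<Rightarrow> real"
  assumes nonneg: "\<And>n. 0 \<le> f n"
    and sublinear: "\<And>d. 0 < d \<Longrightarrow> \<exists>L. \<forall>n>0. f n \<le> L + d * real n"
  shows "limsup (\<lambda>n. ereal (f n / n)) = 0"
proof (rule antisym)
  show "limsup (\<lambda>n. ereal (f n / n)) \<le> 0"
  proof (rule ereal_le_epsilon2)
    fix d :: real
    assume "0 < d"
    then obtain L where L: "\<forall>n>0. f n \<le> L + d / 2 * real n"
      using sublinear[of "d / 2"] by auto
    obtain K :: nat where K: "2 * L / d < K"
      using reals_Archimedean2 by blast
    have "f n / n \<le> d" if "max 1 K \<le> n" for n
    proof -
      have "2 * L < d * K"
        using K \<open>0 < d\<close> by (simp add: divide_less_eq mult.commute)
      also have "\<dots> \<le> d * n"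
        using that \<open>0 < d\<close> by (intro mult_left_mono) auto
      finally have "2 * L \<le> d * n"
        by simp
      moreover have "f n \<le> L + d / 2 * n"
        using L that by simp
      ultimately have "f n \<le> d * n"
        by linarith
      then show ?thesis
        using that by (simp add: divide_le_eq)
    qed
    then have "limsup (\<lambda>n. ereal (f n / n)) \<le> ereal d"
      by (intro Limsup_bounded eventually_sequentiallyI[of "max 1 K"]) simp
    then show "limsup (\<lambda>n. ereal (f n / n)) \<le> 0 + ereal d"
      by simp
  qed
  show "0 \<le> limsup (\<lambda>n. ereal (f n / n))"
    using nonneg by (intro le_Limsup) auto
qed

lemma (in information_space) seq_entropy_eq_0_if_totally_bounded:
  fixes X B :: "'a set" and act :: "'g \<Rightarrow> 'a \<Rightarrow> 'a" and S :: "'g set"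
  defines "P g \<equiv> {x \<in> X. act g x \<in> B}"
  assumes "b = exp 1" "space M = X" "range gs \<subseteq> S"
    and maps: "\<And>g x. g \<in> S \<Longrightarrow> x \<in> X \<Longrightarrow> act g x \<in> X"
    and events: "\<And>g. g \<in> S \<Longrightarrow> P g \<in> events"
    and approx: "\<forall>e>0. \<exists>H. finite H \<and> H \<subseteq> S \<and> (\<forall>g\<in>S. \<exists>h\<in>H. prob (sym_diff (P g) (P h)) < e)"
  shows "seq_entropy M X act {B, X - B} gs = 0"
proof -
  let ?J = "join_pre X act {B, X - B} gs"
  have gs: "gs i \<in> S" for i
    using \<open>range gs \<subseteq> S\<close> by blast
  have entropy_join: "part_entropy M (?J n) = \<H>(memberships (map (\<lambda>i. P (gs i)) [1..<Suc n]))"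
    if "0 < n" for n
    unfolding P_def using assms(2,3) that maps events gs
    by (intro part_entropy_join_pre_eq_entropy) (auto simp: P_def)
  have net: "\<forall>e>0. \<exists>F. finite F \<and> F \<subseteq> events \<and> (\<forall>A\<in>P ` S. \<exists>C\<in>F. prob (sym_diff A C) < e)"
  proof (intro allI impI)
    fix e :: real
    assume "0 < e"
    then obtain H where "finite H" "H \<subseteq> S" "\<forall>g\<in>S. \<exists>h\<in>H. prob (sym_diff (P g) (P h)) < e"
      using approx[rule_format, OF \<open>0 < e\<close>] by blast
    then show "\<exists>F. finite F \<and> F \<subseteq> events \<and> (\<forall>A\<in>P ` S. \<exists>C\<in>F. prob (sym_diff A C) < e)"
      using events by (intro exI[of _ "P ` H"]) blast
  qed
  have "\<exists>L. \<forall>n>0. part_entropy M (?J n) \<le> L + d * real n" if "0 < d" for d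
  proof -
    have "P ` S \<subseteq> events"
      using events by auto
    with net obtain L
      where L: "\<And>As. set As \<subseteq> P ` S \<Longrightarrow> \<H>(memberships As) \<le> L + d * length As"
      using \<open>0 < d\<close> by (rule entropy_memberships_sublinear) auto
    have "part_entropy M (?J n) \<le> L + d * real n" if "0 < n" for n
      using L[of "map (\<lambda>i. P (gs i)) [1..<Suc n]"] entropy_join[OF that] gs
      by (auto simp del: upt_Suc)
    then show ?thesis
      by blast
  qed
  then show ?thesis
    unfolding seq_entropy_def by (intro limsup_div_eq_0_if_sublinear part_entropy_nonneg)
qed

lemma measurable_completion_if_measure_preserving:
  assumes f: "f \<in> M \<rightarrow>\<^sub>M M"
    and preserving: "\<And>A. A \<in> sets M \<Longrightarrow> emeasure M (f -` A \<inter> space M) = emeasure M A"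
  shows "f \<in> completion M \<rightarrow>\<^sub>M completion M"
proof (rule completion.measurable_completion2)
  show "f \<in> completion M \<rightarrow>\<^sub>M M"
    by (rule measurable_completion[OF f])
  show "null_sets M \<subseteq> null_sets (distr (completion M) M f)"
  proof
    fix A
    assume A: "A \<in> null_sets M"
    have "emeasure M (f -` A \<inter> space M) = 0"
      using preserving[OF null_setsD2[OF A]] null_setsD1[OF A] by simp
    then have "f -` A \<inter> space M \<in> null_sets M"
      using measurable_sets[OF f null_setsD2[OF A]] by (rule null_setsI)
    then show "A \<in> null_sets (distr (completion M) M f)"
      using null_setsD2[OF A]
      by (simp add: null_sets_distr_iff[OF measurable_completion[OF f]] null_sets_completionI)
  qed
qed

lemma measurable_completion_if_continuous_invariant:
  assumes "finite_measure M" and M: "sets M = sets (restrict_space borel X)"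
    and "continuous_on X f" "f ` X \<subseteq> X"
    and invariant: "\<forall>A\<in>sets M. measure M {x \<in> X. f x \<in> A} = measure M A"
  shows "f \<in> completion M \<rightarrow>\<^sub>M completion M"
proof (rule measurable_completion_if_measure_preserving)
  have "space M = X"
    using sets_eq_imp_space_eq[OF M] by (simp add: space_restrict_space)
  have "f \<in> restrict_space borel X \<rightarrow>\<^sub>M restrict_space borel X"
    using assms(3,4)
    by (intro measurable_restrict_space2 borel_measurable_continuous_on_restrict)
      (auto simp: space_restrict_space)
  then show "f \<in> M \<rightarrow>\<^sub>M M"
    using measurable_cong_sets[OF M M] by simp
  show "emeasure M (f -` A \<inter> space M) = emeasure M A" if "A \<in> sets M" for A
  proof -
    have "f -` A \<inter> space M = {x \<in> X. f x \<in> A}"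
      using \<open>space M = X\<close> by auto
    then show ?thesis
      using invariant that \<open>finite_measure M\<close> by (simp add: finite_measure.emeasure_eq_measure)
  qed
qed

lemma integral_indicator_diff_square:
  assumes "space M = X"
  shows "(LINT x|M. (indicator B (f x) - indicator B (g x) :: real)\<^sup>2)
    = measure M (sym_diff {x \<in> X. f x \<in> B} {x \<in> X. g x \<in> B})"
proof -
  let ?D = "sym_diff {x \<in> X. f x \<in> B} {x \<in> X. g x \<in> B}"
  have "(LINT x|M. (indicator B (f x) - indicator B (g x) :: real)\<^sup>2) = (LINT x|M. indicator ?D x)"
    using assms by (intro Bochner_Integration.integral_cong) (auto split: split_indicator)
  also have "?D \<inter> space M = ?D"
    using assms by auto
  then have "(LINT x|M. indicator ?D x) = measure M ?D"
    by simp
  finally show ?thesis .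
qed

theorem lemmaB2:
  fixes G :: "('g, 'b) monoid_scheme"
    and act :: "'g \<Rightarrow> 'x::metric_space \<Rightarrow> 'x"
    and X :: "'x set"
    and M :: "'x measure"
    and B :: "'x set"
  assumes grp: "group G"
    and cnt: "countable (carrier G)"
    and inf: "infinite (carrier G)"
    and cpt: "compact X"
    and act_id: "\<forall>x\<in>X. act \<one>\<^bsub>G\<^esub> x = x"
    and act_mult: "\<forall>g\<in>carrier G. \<forall>h\<in>carrier G. \<forall>x\<in>X.
                     act (g \<otimes>\<^bsub>G\<^esub> h) x = act g (act h x)"
    and act_homeo: "\<forall>g\<in>carrier G. homeomorphism X X (act g) (act (inv\<^bsub>G\<^esub> g))"
    and prob: "prob_space M"
    and borel_M: "sets M = sets (restrict_space borel X)"
    and inv_M: "\<forall>g\<in>carrier G. \<forall>A\<in>sets M. measure M {x\<in>X. act g x \<in> A} = measure M A"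
    and B_meas: "B \<in> sets (completion M)"
    and precompact: "\<forall>e>0. \<exists>F. finite F \<and> F \<subseteq> carrier G \<and>
        (\<forall>g\<in>carrier G. \<exists>h\<in>F.
           (LINT x|completion M. (indicator B (act g x) - indicator B (act h x) :: real)^2) < e)"
  shows "sup_seq_entropy G (completion M) X act {B, X - B} = 0"
proof -
  interpret M: prob_space M
    by (rule prob)
  interpret N: information_space "completion M" "exp 1"
    by (simp add: information_space_def information_space_axioms_def M.prob_space_completion)
  have space_M: "space M = X"
    using sets_eq_imp_space_eq[OF borel_M] by (simp add: space_restrict_space)
  then have space: "space (completion M) = X"
    by simp
  have act_X: "act g x \<in> X" if "g \<in> carrier G" "x \<in> X" for g x
    using act_homeo that unfolding homeomorphism_def by blast
  have act_measurable: "act g \<in> completion M \<rightarrow>\<^sub>M completion M" if "g \<in> carrier G" for g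
    using act_homeo inv_M act_X that borel_M M.finite_measure_axioms
    by (intro measurable_completion_if_continuous_invariant) (auto simp: homeomorphism_def)
  have events: "{x \<in> X. act g x \<in> B} \<in> N.events" if "g \<in> carrier G" for g
  proof -
    have "{x \<in> X. act g x \<in> B} = act g -` B \<inter> space (completion M)"
      using space by auto
    then show ?thesis
      using measurable_sets[OF act_measurable[OF that] B_meas] by simp
  qed
  have "seq_entropy (completion M) X act {B, X - B} gs = 0" if "\<forall>n. gs n \<in> carrier G" for gs
    using that act_X events precompact
    by (intro N.seq_entropy_eq_0_if_totally_bounded[where S = "carrier G"])
      (auto simp: space_M integral_indicator_diff_square[OF space])
  moreover have "(\<lambda>n. \<one>\<^bsub>G\<^esub>) \<in> {gs. \<forall>n. gs n \<in> carrier G}"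
    using grp by (simp add: group.is_monoid monoid.one_closed)
  ultimately show ?thesis
    unfolding sup_seq_entropy_def by (intro SUP_eq_const) auto
qed

end
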